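(* Let $(X,d_X)$ be a compact metric space and $\{U_i\}_{i=1}^N$ a finite open cover of $X$. Suppose that for each $i$ there are a map $f_i:U_i\to X$ and constants $L_i>1$, $\alpha_i\ge1$, $C_i>0$ such that for all $x,y,z\in U_i$ with $x\ne y$, $x\ne z$: (1) $d_X(f_i(x),f_i(y))\ge L_i\,d_X(x,y)$; (2) $\frac{d_X(f_i(x),f_i(y))}{d_X(x,y)}-\frac{d_X(f_i(x),f_i(z))}{d_X(x,z)}\le C_i\operatorname{diam}(\{x,y,z\})^{\alpha_i}$. Then $X$ is quasi-self-similar.
   Context: A metric space $X$ is ($H$-)quasi-self-similar if there exist $r_0>0$ and $H\ge1$ such that for every ball $B$ of radius $r<r_0$ there is a map $f_B:B\to X$ with $\frac1H\frac{r_0}{r}d_X(x,y)\le d_X(f_B(x),f_B(y))\le H\frac{r_0}{r}d_X(x,y)$ for all $x,y\in B$. *)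

theory Defs
  imports "HOL-Analysis.Analysis"
begin

text \<open>A metric space is modelled as a subset X of a metric_space type, with the
induced metric. Balls in X are the sets ball x r \<inter> X with centre x \<in> X and radius r > 0.\<close>

definition quasi_self_similar :: "'a::metric_space set \<Rightarrow> bool" where
  "quasi_self_similar X \<longleftrightarrow>
     (\<exists>r0>0. \<exists>H\<ge>1. \<forall>x\<in>X. \<forall>r. 0 < r \<and> r < r0 \<longrightarrow>
        (\<exists>f. f ` (ball x r \<inter> X) \<subseteq> X \<and>
             (\<forall>y\<in>ball x r \<inter> X. \<forall>z\<in>ball x r \<inter> X.
                 (1 / H) * (r0 / r) * dist y z \<le> dist (f y) (f z) \<and>
                 dist (f y) (f z) \<le> H * (r0 / r) * dist y z)))"

end

theory Submission
  imports Defs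
begin

(* Near any point each f_i is almost a similarity: it expands distances by at least L_i > 1,
   and by (2) its stretch d(f x, f y) / d(x, y) varies by O(t) on sets of size t <= 1, while
   compactness bounds the stretch from above.  Given a ball B of radius r, push it forward
   repeatedly by a map f_i whose domain contains the current image of B (a Lebesgue number of
   the cover guarantees one exists while the image is small).  The composite is bi-Lipschitz
   with constants m <= M; m grows geometrically and each step adds distortion O(r m), so the
   geometric series gives M <= m exp (A r m).  Stopping once m reaches r0 / r yields a map that
   rescales B by r0 / r up to a bounded factor. *)

definition stretch :: "('a::metric_space \<Rightarrow> 'b::metric_space) \<Rightarrow> 'a \<Rightarrow> 'a \<Rightarrow> real" where
  "stretch F x y = dist (F x) (F y) / dist x y"

definition stretch_holder_on :: "'a::metric_space set \<Rightarrow> ('a \<Rightarrow> 'b::metric_space) \<Rightarrow> real \<Rightarrow> real \<Rightarrow> bool" where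
  "stretch_holder_on U F C \<alpha> \<longleftrightarrow>
     (\<forall>x\<in>U. \<forall>y\<in>U. \<forall>z\<in>U. x \<noteq> y \<longrightarrow> x \<noteq> z \<longrightarrow>
        stretch F x y - stretch F x z \<le> C * diameter {x, y, z} powr \<alpha>)"

definition bilipschitz_on :: "real \<Rightarrow> real \<Rightarrow> 'a::metric_space set \<Rightarrow> ('a \<Rightarrow> 'b::metric_space) \<Rightarrow> bool" where
  "bilipschitz_on m M S g \<longleftrightarrow>
     (\<forall>y\<in>S. \<forall>z\<in>S. m * dist y z \<le> dist (g y) (g z) \<and> dist (g y) (g z) \<le> M * dist y z)"

lemma bilipschitz_on_mono:
  assumes "bilipschitz_on m M S g" "m' \<le> m" "M \<le> M'"
  shows "bilipschitz_on m' M' S g"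
  using assms unfolding bilipschitz_on_def
  by (smt (verit, best) mult_right_mono zero_le_dist)

lemma bilipschitz_on_comp:
  assumes "bilipschitz_on m M S g" "bilipschitz_on m' M' (g ` S) h" "0 \<le> m'" "0 \<le> M'"
  shows "bilipschitz_on (m * m') (M * M') S (h \<circ> g)"
  unfolding bilipschitz_on_def
proof (intro ballI conjI)
  fix y z assume "y \<in> S" "z \<in> S"
  then have g: "m * dist y z \<le> dist (g y) (g z)" "dist (g y) (g z) \<le> M * dist y z"
    and h: "m' * dist (g y) (g z) \<le> dist (h (g y)) (h (g z))"
      "dist (h (g y)) (h (g z)) \<le> M' * dist (g y) (g z)"
    using assms(1,2) unfolding bilipschitz_on_def by auto
  have "m * m' * dist y z \<le> m' * dist (g y) (g z)"
    using mult_left_mono[OF g(1) assms(3)] by (simp add: ac_simps)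
  then show "m * m' * dist y z \<le> dist ((h \<circ> g) y) ((h \<circ> g) z)"
    using h(1) by simp
  have "M' * dist (g y) (g z) \<le> M * M' * dist y z"
    using mult_left_mono[OF g(2) assms(4)] by (simp add: ac_simps)
  then show "dist ((h \<circ> g) y) ((h \<circ> g) z) \<le> M * M' * dist y z"
    using h(2) by simp
qed

lemma bilipschitz_on_image_dist_le:
  assumes "bilipschitz_on m M S g" "\<forall>y\<in>S. \<forall>z\<in>S. dist y z \<le> s" "0 \<le> M"
  shows "\<forall>y\<in>g ` S. \<forall>z\<in>g ` S. dist y z \<le> M * s"
proof (intro ballI)
  fix y z assume "y \<in> g ` S" "z \<in> g ` S"
  then obtain y' z' where "y' \<in> S" "z' \<in> S" "y = g y'" "z = g z'" by blast
  then show "dist y z \<le> M * s"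
    using assms unfolding bilipschitz_on_def by (meson mult_left_mono order_trans)
qed

lemma diameter_le_dist_bound:
  fixes S :: "'a::metric_space set"
  assumes "0 \<le> t" "\<forall>x\<in>S. \<forall>y\<in>S. dist x y \<le> t"
  shows "diameter S \<le> t"
  using assms by (auto simp: diameter_def intro: cSUP_least)

lemma stretch_le_stretch_same_base:
  assumes "stretch_holder_on U F C \<alpha>" "0 \<le> C" "0 \<le> \<alpha>"
    and "x \<in> U" "y \<in> U" "z \<in> U" "x \<noteq> y" "x \<noteq> z"
    and "\<forall>p\<in>{x, y, z}. \<forall>q\<in>{x, y, z}. dist p q \<le> t"
  shows "stretch F x y \<le> stretch F x z + C * t powr \<alpha>"
proof -
  have "0 \<le> t" using assms(9) by (metis insertI1 order.trans zero_le_dist)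
  then have "diameter {x, y, z} \<le> t" using assms(9) by (rule diameter_le_dist_bound)
  moreover have "0 \<le> diameter {x, y, z}" by (simp add: diameter_ge_0 finite_imp_bounded)
  ultimately have "C * diameter {x, y, z} powr \<alpha> \<le> C * t powr \<alpha>"
    using assms(2,3) by (simp add: mult_left_mono powr_mono2)
  then show ?thesis
    using assms(1,4-8) unfolding stretch_holder_on_def by fastforce
qed

lemma stretch_le_stretch:
  assumes holder: "stretch_holder_on U F C \<alpha>" "0 \<le> C" "0 \<le> \<alpha>"
    and "a \<in> U" "b \<in> U" "a' \<in> U" "b' \<in> U" "a \<noteq> b" "a' \<noteq> b'"
    and "\<forall>p\<in>{a, b, a', b'}. \<forall>q\<in>{a, b, a', b'}. dist p q \<le> t"
  shows "stretch F a b \<le> stretch F a' b' + 2 * C * t powr \<alpha>"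
proof (cases "a = a'")
  case True
  have "stretch F a b \<le> stretch F a b' + C * t powr \<alpha>"
    using True assms by (intro stretch_le_stretch_same_base[OF holder]) auto
  moreover have "0 \<le> C * t powr \<alpha>" using holder by simp
  ultimately show ?thesis using True by simp
next
  case False
  have "stretch F a b \<le> stretch F a a' + C * t powr \<alpha>"
    using False assms by (intro stretch_le_stretch_same_base[OF holder]) auto
  moreover have "stretch F a' a \<le> stretch F a' b' + C * t powr \<alpha>"
    using False assms by (intro stretch_le_stretch_same_base[OF holder]) auto
  ultimately show ?thesis by (simp add: stretch_def dist_commute)
qed

lemma stretch_bounded:
  fixes F :: "'a::metric_space \<Rightarrow> 'b::metric_space"
  assumes "compact X" "U \<subseteq> X" and holder: "stretch_holder_on U F C \<alpha>" "0 \<le> C" "0 \<le> \<alpha>"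
  obtains Mr where "\<And>a b. a \<in> U \<Longrightarrow> b \<in> U \<Longrightarrow> a \<noteq> b \<Longrightarrow> dist a b \<le> 1 \<Longrightarrow> stretch F a b \<le> Mr"
proof -
  obtain k where k: "finite k" "X \<subseteq> (\<Union>c\<in>k. ball c 1)"
    using assms(1) unfolding compact_eq_totally_bounded by (meson zero_less_one)
  define P where "P c = {(p, q). p \<in> U \<and> q \<in> U \<and> p \<noteq> q \<and> dist p c < 2 \<and> dist q c < 2}" for c
  (* ref c is junk when P c is empty, but then c is never the centre chosen for a pair below. *)
  define ref where "ref c = (SOME pq. pq \<in> P c)" for c
  have "bdd_above ((\<lambda>c. case_prod (stretch F) (ref c)) ` k)"
    using k(1) by (intro bdd_above_finite) simp
  then obtain B where B: "\<And>c. c \<in> k \<Longrightarrow> case_prod (stretch F) (ref c) \<le> B"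
    unfolding bdd_above_def by blast
  show ?thesis
  proof (rule that[of "B + 2 * C * 4 powr \<alpha>"])
    fix a b assume ab: "a \<in> U" "b \<in> U" "a \<noteq> b" "dist a b \<le> 1"
    obtain c where c: "c \<in> k" "dist a c < 1" using k(2) assms(2) ab(1) by (force simp: dist_commute)
    have "dist b c < 2" using c ab dist_triangle[of b c a] by (simp add: dist_commute)
    then have "(a, b) \<in> P c" unfolding P_def using ab c by auto
    then have "ref c \<in> P c" unfolding ref_def by (metis some_in_eq empty_iff)
    then obtain p q where pq: "ref c = (p, q)" "p \<in> U" "q \<in> U" "p \<noteq> q" "dist p c < 2" "dist q c < 2"
      unfolding P_def by auto
    have near: "dist u c < 2" if "u \<in> {a, b, p, q}" for u
      using that c \<open>dist b c < 2\<close> pq by auto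
    have "\<forall>u\<in>{a, b, p, q}. \<forall>v\<in>{a, b, p, q}. dist u v \<le> 4"
      using near dist_triangle2 by (smt (verit))
    then have "stretch F a b \<le> stretch F p q + 2 * C * 4 powr \<alpha>"
      using ab pq by (intro stretch_le_stretch[OF holder]) auto
    then show "stretch F a b \<le> B + 2 * C * 4 powr \<alpha>" using B[OF c(1)] pq(1) by simp
  qed
qed

lemma stretch_bounded_family:
  fixes F :: "'i \<Rightarrow> 'a::metric_space \<Rightarrow> 'b::metric_space"
  assumes "compact X" "\<And>i. i \<in> I \<Longrightarrow> U i \<subseteq> X"
    and "\<And>i. i \<in> I \<Longrightarrow> stretch_holder_on (U i) (F i) (C i) (\<alpha> i)"
    and "\<And>i. i \<in> I \<Longrightarrow> 0 \<le> C i \<and> 0 \<le> \<alpha> i"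
  obtains Mr where "\<And>i a b. i \<in> I \<Longrightarrow> a \<in> U i \<Longrightarrow> b \<in> U i \<Longrightarrow> a \<noteq> b \<Longrightarrow> dist a b \<le> 1 \<Longrightarrow>
      stretch (F i) a b \<le> Mr i"
proof -
  have "\<exists>Mr. \<forall>a\<in>U i. \<forall>b\<in>U i. a \<noteq> b \<longrightarrow> dist a b \<le> 1 \<longrightarrow> stretch (F i) a b \<le> Mr"
    if i: "i \<in> I" for i
  proof -
    obtain Mr where "\<And>a b. a \<in> U i \<Longrightarrow> b \<in> U i \<Longrightarrow> a \<noteq> b \<Longrightarrow> dist a b \<le> 1 \<Longrightarrow>
        stretch (F i) a b \<le> Mr"
      by (rule stretch_bounded[OF assms(1) assms(2,3)[OF i]]) (use assms(4)[OF i] in auto)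
    then show ?thesis by blast
  qed
  then obtain Mr where Mr: "\<forall>i\<in>I. \<forall>a\<in>U i. \<forall>b\<in>U i. a \<noteq> b \<longrightarrow> dist a b \<le> 1 \<longrightarrow>
      stretch (F i) a b \<le> Mr i"
    by metis
  show ?thesis by (rule that) (use Mr in blast)
qed

lemma almost_similarity_on_small_set:
  fixes F :: "'a::metric_space \<Rightarrow> 'b::metric_space"
  assumes expanding: "\<And>x y. x \<in> U \<Longrightarrow> y \<in> U \<Longrightarrow> x \<noteq> y \<Longrightarrow> L * dist x y \<le> dist (F x) (F y)"
    and holder: "stretch_holder_on U F C \<alpha>" "0 \<le> C" "1 \<le> \<alpha>"
    and bounded: "\<And>a b. a \<in> U \<Longrightarrow> b \<in> U \<Longrightarrow> a \<noteq> b \<Longrightarrow> dist a b \<le> 1 \<Longrightarrow> stretch F a b \<le> Mr"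
    and S: "S \<subseteq> U" "0 \<le> t" "t \<le> 1" "\<forall>y\<in>S. \<forall>z\<in>S. dist y z \<le> t"
  shows "\<exists>\<kappa>. L \<le> \<kappa> \<and> \<kappa> \<le> max L Mr \<and> bilipschitz_on \<kappa> (\<kappa> + 4 * C * t) S F"
proof (cases "\<exists>a\<in>S. \<exists>b\<in>S. a \<noteq> b")
  case False
  then show ?thesis by (intro exI[of _ L]) (auto simp: bilipschitz_on_def)
next
  case True
  then obtain a b where ab: "a \<in> S" "b \<in> S" "a \<noteq> b" by blast
  define e where "e = 2 * C * t"
  have "t powr \<alpha> \<le> t"
    using S(2,3) holder(3) by (cases "t = 0") (auto intro: powr_le_one_le)
  then have "2 * C * t powr \<alpha> \<le> e"
    unfolding e_def using holder(2) by (simp add: mult_left_mono)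
  moreover have "stretch F y z \<le> stretch F y' z' + 2 * C * t powr \<alpha>"
    if "y \<in> S" "z \<in> S" "y' \<in> S" "z' \<in> S" "y \<noteq> z" "y' \<noteq> z'" for y z y' z'
    using that S(1,2,4) holder(3) by (intro stretch_le_stretch[OF holder(1,2)]) auto
  ultimately have close: "stretch F y z \<le> stretch F y' z' + e"
    if "y \<in> S" "z \<in> S" "y' \<in> S" "z' \<in> S" "y \<noteq> z" "y' \<noteq> z'" for y z y' z'
    using that by fastforce
  define \<kappa> where "\<kappa> = max L (stretch F a b - e)"
  have "dist a b \<le> 1" using ab S(3,4) by (meson order_trans)
  then have "stretch F a b \<le> Mr" using ab S(1) by (intro bounded) auto
  moreover have "0 \<le> e" unfolding e_def using holder S by simp
  ultimately have "L \<le> \<kappa>" "\<kappa> \<le> max L Mr" unfolding \<kappa>_def by auto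
  moreover have "bilipschitz_on \<kappa> (\<kappa> + 4 * C * t) S F"
    unfolding bilipschitz_on_def
  proof (intro ballI)
    fix y z assume yz: "y \<in> S" "z \<in> S"
    show "\<kappa> * dist y z \<le> dist (F y) (F z) \<and> dist (F y) (F z) \<le> (\<kappa> + 4 * C * t) * dist y z"
    proof (cases "y = z")
      case False
      then have "0 < dist y z" by simp
      have "L \<le> stretch F y z"
        using expanding[of y z] yz S(1) False \<open>0 < dist y z\<close> by (auto simp: stretch_def pos_le_divide_eq)
      moreover have "stretch F a b \<le> stretch F y z + e" "stretch F y z \<le> stretch F a b + e"
        using close yz ab False by auto
      ultimately have "\<kappa> \<le> stretch F y z" "stretch F y z \<le> \<kappa> + 4 * C * t"
        unfolding \<kappa>_def e_def by auto
      then show ?thesis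
        using \<open>0 < dist y z\<close> by (simp add: stretch_def pos_le_divide_eq pos_divide_le_eq)
    qed simp
  qed
  ultimately show ?thesis by blast
qed

lemma Lebesgue_number_openin:
  fixes X :: "'a::metric_space set"
  assumes "compact X" "I \<noteq> {}" "\<And>i. i \<in> I \<Longrightarrow> openin (top_of_set X) (U i)" "X \<subseteq> (\<Union>i\<in>I. U i)"
  obtains \<delta> where "0 < \<delta>" "\<And>T. T \<subseteq> X \<Longrightarrow> diameter T < \<delta> \<Longrightarrow> \<exists>i\<in>I. T \<subseteq> U i"
proof -
  have "\<forall>i\<in>I. \<exists>V. open V \<and> U i = X \<inter> V"
    using assms(3) unfolding openin_open by blast
  then obtain V where V: "\<And>i. i \<in> I \<Longrightarrow> open (V i) \<and> U i = X \<inter> V i"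
    by metis
  have cover: "X \<subseteq> \<Union>(V ` I)" using assms(4) V by blast
  have "V ` I \<noteq> {}" using assms(2) by blast
  obtain \<delta> where "0 < \<delta>" and \<delta>: "\<And>T. T \<subseteq> X \<Longrightarrow> diameter T < \<delta> \<Longrightarrow> \<exists>B \<in> V ` I. T \<subseteq> B"
    by (rule Lebesgue_number_lemma[OF assms(1) \<open>V ` I \<noteq> {}\<close> cover]) (use V in auto)
  show ?thesis
  proof (rule that[OF \<open>0 < \<delta>\<close>])
    fix T assume "T \<subseteq> X" "diameter T < \<delta>"
    then have "\<exists>B\<in>V ` I. T \<subseteq> B" by (rule \<delta>)
    then obtain i where "i \<in> I" "T \<subseteq> V i" by blast
    then show "\<exists>i\<in>I. T \<subseteq> U i" using \<open>T \<subseteq> X\<close> V by auto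
  qed
qed

lemma exp_distortion_step:
  fixes M m \<kappa> e a b :: real
  assumes "M \<le> m * exp a" "0 \<le> m" "1 \<le> \<kappa>" "0 \<le> e" "a + e \<le> b"
  shows "M * (\<kappa> + e) \<le> m * \<kappa> * exp b"
proof -
  have "\<kappa> + e \<le> \<kappa> * (1 + e)"
    using mult_right_mono[OF assms(3,4)] by (simp add: algebra_simps)
  also have "\<dots> \<le> \<kappa> * exp e" using assms(3) by (simp add: exp_ge_add_one_self)
  finally have "M * (\<kappa> + e) \<le> m * exp a * (\<kappa> * exp e)"
    using assms by (intro mult_mono) auto
  also have "\<dots> = m * \<kappa> * exp (a + e)" by (simp add: exp_add)
  also have "\<dots> \<le> m * \<kappa> * exp b" using assms by (intro mult_left_mono) auto
  finally show ?thesis .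
qed

locale expanding_almost_similarities =
  fixes X :: "'a::metric_space set" and Lmin K c \<delta> :: real
  assumes Lmin_gt_1: "1 < Lmin" and Lmin_le_K: "Lmin \<le> K" and c_nonneg: "0 \<le> c"
    and \<delta>_pos: "0 < \<delta>"
    and local_almost_similarity: "\<And>S t. S \<subseteq> X \<Longrightarrow> 0 \<le> t \<Longrightarrow> t < \<delta> \<Longrightarrow>
        \<forall>y\<in>S. \<forall>z\<in>S. dist y z \<le> t \<Longrightarrow>
        \<exists>h \<kappa>. h ` S \<subseteq> X \<and> Lmin \<le> \<kappa> \<and> \<kappa> \<le> K \<and> bilipschitz_on \<kappa> (\<kappa> + c * t) S h"
begin

(* A step at scale m acts on a set of size t <= 4 r m and adds c t to the exponent of the
   distortion; with this A that is at most A r m (Lmin - 1), the gain of A r m when m grows by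
   the factor Lmin. *)
definition A :: real where "A = 4 * c / (Lmin - 1)"

(* delta / 4 keeps the images of a ball of radius r < r0 small enough for
   local_almost_similarity, and ln 2 / (A K + 1) keeps the distortion factor exp (A r m) <= 2. *)
definition r0 :: real where "r0 = min (\<delta> / 4) (ln 2 / (A * K + 1))"

lemma A_nonneg: "0 \<le> A"
  using c_nonneg Lmin_gt_1 unfolding A_def by simp

lemma K_ge_1: "1 \<le> K"
  using Lmin_gt_1 Lmin_le_K by simp

lemma A_K_plus_1_pos: "0 < A * K + 1"
  using mult_nonneg_nonneg[OF A_nonneg, of K] K_ge_1 by linarith

lemma r0_pos: "0 < r0"
  using \<delta>_pos A_K_plus_1_pos unfolding r0_def by simp

lemma exp_A_K_r0_le_2: "exp (A * K * r0) \<le> 2"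
proof -
  have "r0 \<le> ln 2 / (A * K + 1)" unfolding r0_def by simp
  then have "r0 * (A * K + 1) \<le> ln 2" using A_K_plus_1_pos by (simp add: le_divide_eq)
  then have "A * K * r0 \<le> ln 2" using r0_pos by (simp add: algebra_simps)
  then show ?thesis by (metis exp_le_cancel_iff exp_ln zero_less_numeral)
qed

lemma distortion_absorbed:
  assumes "0 \<le> r" "0 \<le> m" "Lmin \<le> \<kappa>" "t \<le> 4 * r * m"
  shows "A * r * m + c * t \<le> A * r * (m * \<kappa>)"
proof -
  have "c * t \<le> c * (4 * r * m)" using assms(4) c_nonneg by (rule mult_left_mono)
  also have "\<dots> = A * r * m * (Lmin - 1)" using Lmin_gt_1 unfolding A_def by simp
  also have "\<dots> \<le> A * r * m * (\<kappa> - 1)"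
    using assms A_nonneg by (intro mult_left_mono) auto
  finally show ?thesis by (simp add: algebra_simps)
qed

definition admissible_rescaling :: "real \<Rightarrow> 'a set \<Rightarrow> ('a \<Rightarrow> 'a) \<Rightarrow> real \<Rightarrow> real \<Rightarrow> bool" where
  "admissible_rescaling r B g m M \<longleftrightarrow>
     g ` B \<subseteq> X \<and> 1 \<le> m \<and> m \<le> M \<and> bilipschitz_on m M B g \<and>
     M \<le> m * exp (A * r * m) \<and> m \<le> K * r0 / r"

lemma admissible_rescaling_id:
  assumes "0 < r" "r < r0" "B \<subseteq> X"
  shows "admissible_rescaling r B id 1 1"
proof -
  have "1 \<le> r0 / r" using assms(1,2) by simp
  then have "1 * 1 \<le> K * (r0 / r)" using K_ge_1 by (intro mult_mono) auto
  moreover have "1 \<le> exp (A * r)" using A_nonneg assms(1) by simp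
  ultimately show ?thesis
    using assms(3) unfolding admissible_rescaling_def bilipschitz_on_def by simp
qed

lemma admissible_rescaling_le_double:
  assumes "0 < r" "admissible_rescaling r B g m M"
  shows "M \<le> 2 * m"
proof -
  have m: "1 \<le> m" "m \<le> K * r0 / r" and M: "M \<le> m * exp (A * r * m)"
    using assms(2) unfolding admissible_rescaling_def by auto
  have "r * m \<le> K * r0" using m(2) assms(1) by (simp add: le_divide_eq mult.commute)
  then have "A * r * m \<le> A * K * r0" using mult_left_mono[OF _ A_nonneg] by (simp add: mult.assoc)
  then have "exp (A * r * m) \<le> 2"
    using exp_A_K_r0_le_2 by (meson exp_le_cancel_iff order_trans)
  then have "m * exp (A * r * m) \<le> m * 2" using m(1) by (intro mult_left_mono) auto
  then show ?thesis using M by simp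
qed

lemma admissible_rescaling_step:
  assumes r: "0 < r" and B: "\<forall>y\<in>B. \<forall>z\<in>B. dist y z \<le> 2 * r"
    and adm: "admissible_rescaling r B g m M" and small: "m < r0 / r"
  obtains g' m' M' where "admissible_rescaling r B g' m' M'" "m * Lmin \<le> m'"
proof -
  have gB: "g ` B \<subseteq> X" and m: "1 \<le> m" "m \<le> M" and g: "bilipschitz_on m M B g"
    and M: "M \<le> m * exp (A * r * m)"
    using adm unfolding admissible_rescaling_def by auto
  define t where "t = M * (2 * r)"
  have "t \<le> 4 * r * m"
    using admissible_rescaling_le_double[OF r adm] r unfolding t_def by simp
  moreover have "4 * r * m < 4 * r0" using small r by (simp add: less_divide_eq mult.commute)
  ultimately have "t < \<delta>" using r0_def by linarith
  moreover have "0 \<le> t" using r m unfolding t_def by simp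
  moreover have "\<forall>y\<in>g ` B. \<forall>z\<in>g ` B. dist y z \<le> t"
    unfolding t_def using m by (intro bilipschitz_on_image_dist_le[OF g B]) simp
  ultimately obtain h \<kappa> where h: "h ` g ` B \<subseteq> X" "bilipschitz_on \<kappa> (\<kappa> + c * t) (g ` B) h"
    and \<kappa>: "Lmin \<le> \<kappa>" "\<kappa> \<le> K"
    using local_almost_similarity[OF gB] by blast
  have "0 \<le> c * t" using c_nonneg \<open>0 \<le> t\<close> by simp
  have "admissible_rescaling r B (h \<circ> g) (m * \<kappa>) (M * (\<kappa> + c * t))"
    unfolding admissible_rescaling_def
  proof (intro conjI)
    show "(h \<circ> g) ` B \<subseteq> X" using h(1) by (simp add: image_comp)
    show "1 \<le> m * \<kappa>" using mult_mono[of 1 m 1 \<kappa>] m \<kappa> Lmin_gt_1 by simp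
    show "m * \<kappa> \<le> M * (\<kappa> + c * t)"
      using m \<kappa> Lmin_gt_1 \<open>0 \<le> c * t\<close> by (intro mult_mono) auto
    show "bilipschitz_on (m * \<kappa>) (M * (\<kappa> + c * t)) B (h \<circ> g)"
      using g h(2) \<kappa> Lmin_gt_1 \<open>0 \<le> c * t\<close> by (intro bilipschitz_on_comp) auto
    have "A * r * m + c * t \<le> A * r * (m * \<kappa>)"
      using r m \<kappa> \<open>t \<le> 4 * r * m\<close> by (intro distortion_absorbed) auto
    then show "M * (\<kappa> + c * t) \<le> m * \<kappa> * exp (A * r * (m * \<kappa>))"
      using m \<kappa> Lmin_gt_1 \<open>0 \<le> c * t\<close> by (intro exp_distortion_step[OF M]) auto
    have "m * \<kappa> \<le> r0 / r * K" using small m \<kappa> Lmin_gt_1 by (intro mult_mono) auto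
    then show "m * \<kappa> \<le> K * r0 / r" by (simp add: mult.commute)
  qed
  moreover have "m * Lmin \<le> m * \<kappa>" using m \<kappa> by simp
  ultimately show ?thesis by (rule that)
qed

lemma admissible_rescaling_reaches_scale:
  assumes "0 < r" "\<forall>y\<in>B. \<forall>z\<in>B. dist y z \<le> 2 * r"
  shows "admissible_rescaling r B g m M \<Longrightarrow> r0 / r \<le> m * Lmin ^ n \<Longrightarrow>
    \<exists>g' m' M'. admissible_rescaling r B g' m' M' \<and> r0 / r \<le> m'"
proof (induction n arbitrary: g m M)
  case 0
  then show ?case by auto
next
  case (Suc n)
  show ?case
  proof (cases "r0 / r \<le> m")
    case True
    then show ?thesis using Suc.prems(1) by blast
  next
    case False
    then have "m < r0 / r" by simp
    obtain g' m' M' where adm': "admissible_rescaling r B g' m' M'" "m * Lmin \<le> m'"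
      by (rule admissible_rescaling_step[OF assms Suc.prems(1) \<open>m < r0 / r\<close>])
    have "r0 / r \<le> (m * Lmin) * Lmin ^ n" using Suc.prems(2) by (simp add: ac_simps)
    also have "\<dots> \<le> m' * Lmin ^ n" using adm'(2) Lmin_gt_1 by (intro mult_right_mono) auto
    finally show ?thesis using Suc.IH[OF adm'(1)] by blast
  qed
qed

lemma rescaling_of_small_set:
  assumes "0 < r" "r < r0" "B \<subseteq> X" "\<forall>y\<in>B. \<forall>z\<in>B. dist y z \<le> 2 * r"
  obtains g where "g ` B \<subseteq> X" "bilipschitz_on (1 / (2 * K) * (r0 / r)) (2 * K * (r0 / r)) B g"
proof -
  obtain n where "r0 / r < Lmin ^ n" using real_arch_pow[OF Lmin_gt_1] by blast
  then have "r0 / r \<le> 1 * Lmin ^ n" by simp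
  then obtain g m M where adm: "admissible_rescaling r B g m M" and "r0 / r \<le> m"
    using admissible_rescaling_reaches_scale[OF assms(1,4) admissible_rescaling_id[OF assms(1-3)]]
    by blast
  have "1 / (2 * K) * (r0 / r) \<le> 1 * (r0 / r)"
    using K_ge_1 r0_pos assms(1) by (intro mult_right_mono) auto
  then have "1 / (2 * K) * (r0 / r) \<le> m" using \<open>r0 / r \<le> m\<close> by linarith
  moreover have "M \<le> 2 * K * (r0 / r)"
    using admissible_rescaling_le_double[OF assms(1) adm] adm
    unfolding admissible_rescaling_def by simp
  ultimately show ?thesis
    using adm that unfolding admissible_rescaling_def by (meson bilipschitz_on_mono)
qed

theorem quasi_self_similar: "quasi_self_similar X"
  unfolding quasi_self_similar_def
proof (rule exI[of _ r0], rule conjI[OF r0_pos], rule exI[of _ "2 * K"], intro conjI ballI allI impI)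
  show "1 \<le> 2 * K" using K_ge_1 by simp
  fix x r assume "x \<in> X" "0 < r \<and> r < r0"
  have diam: "\<forall>y\<in>ball x r \<inter> X. \<forall>z\<in>ball x r \<inter> X. dist y z \<le> 2 * r"
    using dist_triangle_less_add[of y x r z r for y z] by (force simp: dist_commute)
  obtain g where "g ` (ball x r \<inter> X) \<subseteq> X"
    "bilipschitz_on (1 / (2 * K) * (r0 / r)) (2 * K * (r0 / r)) (ball x r \<inter> X) g"
    by (rule rescaling_of_small_set[of r "ball x r \<inter> X"]) (use \<open>0 < r \<and> r < r0\<close> diam in auto)
  then show "\<exists>f. f ` (ball x r \<inter> X) \<subseteq> X \<and>
      (\<forall>y\<in>ball x r \<inter> X. \<forall>z\<in>ball x r \<inter> X.
         1 / (2 * K) * (r0 / r) * dist y z \<le> dist (f y) (f z) \<and>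
         dist (f y) (f z) \<le> 2 * K * (r0 / r) * dist y z)"
    by (intro exI[of _ g]) (auto simp: bilipschitz_on_def)
qed

end

lemma expanding_almost_similarities_from_cover:
  fixes X :: "'a::metric_space set" and I :: "'i set"
  assumes X: "compact X" "X = (\<Union>i\<in>I. U i)" and I: "finite I" "I \<noteq> {}"
    and open_U: "\<And>i. i \<in> I \<Longrightarrow> openin (top_of_set X) (U i)"
    and maps: "\<And>i. i \<in> I \<Longrightarrow> f i ` U i \<subseteq> X"
    and params: "\<And>i. i \<in> I \<Longrightarrow> 1 < L i \<and> 1 \<le> \<alpha> i \<and> 0 \<le> C i"
    and expanding: "\<And>i x y. i \<in> I \<Longrightarrow> x \<in> U i \<Longrightarrow> y \<in> U i \<Longrightarrow> x \<noteq> y \<Longrightarrow>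
      L i * dist x y \<le> dist (f i x) (f i y)"
    and holder: "\<And>i. i \<in> I \<Longrightarrow> stretch_holder_on (U i) (f i) (C i) (\<alpha> i)"
  obtains Lmin K c \<delta> where "expanding_almost_similarities X Lmin K c \<delta>"
proof -
  have U_X: "U i \<subseteq> X" and nonneg: "0 \<le> C i \<and> 0 \<le> \<alpha> i" if "i \<in> I" for i
    using X(2) params[OF that] that by auto
  obtain Mr where Mr: "\<And>i a b. i \<in> I \<Longrightarrow> a \<in> U i \<Longrightarrow> b \<in> U i \<Longrightarrow> a \<noteq> b \<Longrightarrow>
      dist a b \<le> 1 \<Longrightarrow> stretch (f i) a b \<le> Mr i"
    using stretch_bounded_family[of X I U f C \<alpha>, OF X(1) U_X holder nonneg] by metis
  obtain \<delta> where "0 < \<delta>" and lebesgue: "\<And>T. T \<subseteq> X \<Longrightarrow> diameter T < \<delta> \<Longrightarrow> \<exists>i\<in>I. T \<subseteq> U i"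
    using Lebesgue_number_openin[OF X(1) I(2) open_U equalityD1[OF X(2)]] by metis
  define Lmin where "Lmin = Min (L ` I)"
  define K where "K = Max ((\<lambda>i. max (L i) (Mr i)) ` I)"
  define Cmax where "Cmax = Max (C ` I)"
  have Lmin: "Lmin \<le> L i" and Cmax: "C i \<le> Cmax" if "i \<in> I" for i
    unfolding Lmin_def Cmax_def using I(1) that by auto
  have K: "max (L i) (Mr i) \<le> K" if "i \<in> I" for i
    unfolding K_def using I(1) that by (intro Max_ge) auto
  show ?thesis
  proof (rule that, unfold_locales)
    show "1 < Lmin" unfolding Lmin_def using I params by (simp add: Min_gr_iff)
    obtain i where "i \<in> I" using I(2) by blast
    show "Lmin \<le> K" using Lmin[OF \<open>i \<in> I\<close>] K[OF \<open>i \<in> I\<close>] by linarith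
    show "0 \<le> 4 * Cmax" using Cmax[OF \<open>i \<in> I\<close>] params[OF \<open>i \<in> I\<close>] by linarith
    show "0 < min \<delta> 1" using \<open>0 < \<delta>\<close> by simp
    fix S t assume S: "S \<subseteq> X" "0 \<le> t" "t < min \<delta> 1" "\<forall>y\<in>S. \<forall>z\<in>S. dist y z \<le> t"
    then have "diameter S < \<delta>" using diameter_le_dist_bound[of t S] by linarith
    then obtain j where j: "j \<in> I" "S \<subseteq> U j" using lebesgue S(1) by blast
    have "t \<le> 1" using S(3) by simp
    obtain \<kappa> where \<kappa>: "L j \<le> \<kappa>" "\<kappa> \<le> max (L j) (Mr j)"
      "bilipschitz_on \<kappa> (\<kappa> + 4 * C j * t) S (f j)"
      using almost_similarity_on_small_set[OF expanding[OF j(1)] holder[OF j(1)] _ _ Mr[OF j(1)]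
          j(2) S(2) \<open>t \<le> 1\<close> S(4)] params[OF j(1)]
      by blast
    have "\<kappa> + 4 * C j * t \<le> \<kappa> + 4 * Cmax * t"
      using Cmax[OF j(1)] S(2) by (simp add: mult_right_mono)
    then have "bilipschitz_on \<kappa> (\<kappa> + 4 * Cmax * t) S (f j)"
      using \<kappa>(3) bilipschitz_on_mono by blast
    moreover have "f j ` S \<subseteq> X" using maps[OF j(1)] j(2) by blast
    moreover have "Lmin \<le> \<kappa>" "\<kappa> \<le> K" using Lmin[OF j(1)] K[OF j(1)] \<kappa>(1,2) by linarith+
    ultimately show "\<exists>h \<kappa>. h ` S \<subseteq> X \<and> Lmin \<le> \<kappa> \<and> \<kappa> \<le> K \<and> bilipschitz_on \<kappa> (\<kappa> + 4 * Cmax * t) S h"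
      by blast
  qed
qed

theorem theorem6p1:
  fixes X :: "'a::metric_space set"
    and N :: nat
    and U :: "nat \<Rightarrow> 'a set"
    and f :: "nat \<Rightarrow> 'a \<Rightarrow> 'a"
    and L \<alpha> C :: "nat \<Rightarrow> real"
  assumes "compact X"
    and "\<And>i. i \<in> {1..N} \<Longrightarrow> openin (top_of_set X) (U i)"
    and "X = (\<Union>i\<in>{1..N}. U i)"
    and "\<And>i. i \<in> {1..N} \<Longrightarrow> f i ` U i \<subseteq> X"
    and "\<And>i. i \<in> {1..N} \<Longrightarrow> L i > 1 \<and> \<alpha> i \<ge> 1 \<and> C i > 0"
    and "\<And>i x y. \<lbrakk>i \<in> {1..N}; x \<in> U i; y \<in> U i; x \<noteq> y\<rbrakk>
           \<Longrightarrow> dist (f i x) (f i y) \<ge> L i * dist x y"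
    and "\<And>i x y z. \<lbrakk>i \<in> {1..N}; x \<in> U i; y \<in> U i; z \<in> U i; x \<noteq> y; x \<noteq> z\<rbrakk>
           \<Longrightarrow> dist (f i x) (f i y) / dist x y - dist (f i x) (f i z) / dist x z
               \<le> C i * diameter {x, y, z} powr \<alpha> i"
  shows "quasi_self_similar X"
proof (cases "N = 0")
  case True
  then have "X = {}" using assms(3) by simp
  then show ?thesis unfolding quasi_self_similar_def by (intro exI[of _ 1] conjI) simp_all
next
  case False
  obtain Lmin K c \<delta> where "expanding_almost_similarities X Lmin K c \<delta>"
  proof (rule expanding_almost_similarities_from_cover[of X U "{1..N}" f L \<alpha> C])
    show "\<And>i. i \<in> {1..N} \<Longrightarrow> stretch_holder_on (U i) (f i) (C i) (\<alpha> i)"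
      using assms(7) unfolding stretch_holder_on_def stretch_def by blast
  qed (use False assms(1-6) in \<open>auto simp: less_imp_le\<close>)
  then show ?thesis by (rule expanding_almost_similarities.quasi_self_similar)
qed

end
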